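(* Let $p\in(1,\infty)$ and let $Y$ be a Banach space admitting an equivalent norm with $(\beta)$-modulus of power type $p$. Then there is a constant $C=C(Y)>0$ such that for every integer $h\ge2$, $$c_Y(T^\omega_h)\ge C\,\log(h)^{1/p}.$$
   Context: For a Banach space $X$ with closed unit ball $B_X$ and a sequence $(y_n)_{n\ge1}$ in $X$, let $\mathrm{sep}[(y_n)]:=\inf\{\|y_m-y_n\|: m\neq n\}$. The $(\beta)$-modulus of a norm is $$\overline{\beta}_X(t):=1-\sup\Big\{\inf_{n\ge1}\tfrac{\|x+y_n\|}{2}\ :\ x\in B_X,\ (y_n)_{n\ge1}\subset B_X,\ \mathrm{sep}[(y_n)]\ge t\Big\},$$ and the norm has $(\beta)$-modulus of power type $p$ if there is $c>0$ with $\overline{\beta}_X(t)\ge ct^p$ for all $t\in(0,2]$. For a positive integer $h$, $T^\omega_h$ is the complete countably branching rooted tree of height $h$: every vertex at distance $<h$ from the root has countably infinitely many children, and vertices at distance $h$ from the root are leaves; it carries the unweighted shortest-path metric. The distortion of an injective map $f\colon (M,d_M)\to(N,d_N)$ is $\mathrm{dist}(f)=\mathrm{Lip}(f)\mathrm{Lip}(f^{-1})$, and $c_Y(M):=\inf\{\mathrm{dist}(f): f\colon M\to Y\text{ injective}\}$ (which is $+\infty$ if no bi-Lipschitz embedding exists). *)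

theory Defs
  imports "HOL-Analysis.Analysis"
begin

definition is_norm :: "('a::real_vector \<Rightarrow> real) \<Rightarrow> bool" where
  "is_norm N \<longleftrightarrow> (\<forall>x. N x = 0 \<longleftrightarrow> x = 0) \<and> (\<forall>x y. N (x + y) \<le> N x + N y)
     \<and> (\<forall>r x. N (r *\<^sub>R x) = \<bar>r\<bar> * N x)"

definition equivalent_norm :: "('a::real_normed_vector \<Rightarrow> real) \<Rightarrow> bool" where
  "equivalent_norm N \<longleftrightarrow> is_norm N \<and>
     (\<exists>a b. 0 < a \<and> 0 < b \<and> (\<forall>x. a * norm x \<le> N x \<and> N x \<le> b * norm x))"

definition sep :: "('a::real_vector \<Rightarrow> real) \<Rightarrow> (nat \<Rightarrow> 'a) \<Rightarrow> real" where
  "sep N y = Inf {N (y m - y n) | m n. 1 \<le> m \<and> 1 \<le> n \<and> m \<noteq> n}"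

text \<open>The (beta)-modulus of the norm N (sup of the empty set is -\<infinity>).\<close>
definition beta_modulus :: "('a::real_vector \<Rightarrow> real) \<Rightarrow> real \<Rightarrow> ereal" where
  "beta_modulus N t = 1 - Sup {ereal (Inf {N (x + y n) / 2 | n. 1 \<le> n}) | x y.
       N x \<le> 1 \<and> (\<forall>n\<ge>1. N (y n) \<le> 1) \<and> sep N y \<ge> t}"

definition beta_power_type :: "('a::real_vector \<Rightarrow> real) \<Rightarrow> real \<Rightarrow> bool" where
  "beta_power_type N p \<longleftrightarrow> (\<exists>c>0. \<forall>t. 0 < t \<and> t \<le> 2 \<longrightarrow> beta_modulus N t \<ge> ereal (c * t powr p))"

text \<open>The countably branching tree of height h: vertices are finite sequences of
  naturals of length at most h (the root is []); children of xs are xs @ [k].\<close>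
definition tree :: "nat \<Rightarrow> nat list set" where
  "tree h = {xs. length xs \<le> h}"

fun lcp :: "nat list \<Rightarrow> nat list \<Rightarrow> nat" where
  "lcp (x # xs) (y # ys) = (if x = y then Suc (lcp xs ys) else 0)"
| "lcp _ _ = 0"

definition tree_dist :: "nat list \<Rightarrow> nat list \<Rightarrow> real" where
  "tree_dist xs ys = real (length xs + length ys - 2 * lcp xs ys)"

definition lip_tree :: "nat \<Rightarrow> (nat list \<Rightarrow> 'a::real_normed_vector) \<Rightarrow> ereal" where
  "lip_tree h f = (SUP (u, v) \<in> {(u, v). u \<in> tree h \<and> v \<in> tree h \<and> u \<noteq> v}.
      ereal (norm (f u - f v) / tree_dist u v))"

definition lip_inv_tree :: "nat \<Rightarrow> (nat list \<Rightarrow> 'a::real_normed_vector) \<Rightarrow> ereal" where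
  "lip_inv_tree h f = (SUP (u, v) \<in> {(u, v). u \<in> tree h \<and> v \<in> tree h \<and> u \<noteq> v}.
      ereal (tree_dist u v / norm (f u - f v)))"

definition distortion_tree :: "nat \<Rightarrow> (nat list \<Rightarrow> 'a::real_normed_vector) \<Rightarrow> ereal" where
  "distortion_tree h f = lip_tree h f * lip_inv_tree h f"

text \<open>c_Y(T^omega_h); the infimum over the empty set is +\<infinity>.\<close>
definition cY_tree :: "'a::real_normed_vector itself \<Rightarrow> nat \<Rightarrow> ereal" where
  "cY_tree _ h = Inf {distortion_tree h f | f :: nat list \<Rightarrow> 'a. inj_on f (tree h)}"

end

theory Submission imports Defs begin

text \<open>Rescale an injective map of the tree so that it becomes non-contracting and D-Lipschitz
  for the equivalent norm, with D comparable to its distortion. A descendant at depth 2^(j+1)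
  below u is reached through a descendant x at depth 2^j and then any of infinitely many
  children of x, whose images are pairwise 2^(j+1) apart. After normalising, the
  (beta)-modulus of power type p makes one of these two-step paths shorter than the sum of its
  halves by a definite proportion; in terms of the p-th power of the stretch ratio, each
  doubling of the depth costs the fixed amount c 2^p / 2. The ratio starts below D and never
  drops below 1, so D^p is at least a multiple of log_2 h.\<close>

lemma is_norm_zero: "is_norm N \<Longrightarrow> N 0 = 0"
  unfolding is_norm_def by blast

lemma is_norm_scaleR: "is_norm N \<Longrightarrow> N (r *\<^sub>R x) = \<bar>r\<bar> * N x"
  unfolding is_norm_def by blast

lemma is_norm_triangle: "is_norm N \<Longrightarrow> N (x + y) \<le> N x + N y"
  unfolding is_norm_def by blast

lemma is_norm_nonneg:
  assumes "is_norm N" shows "0 \<le> N x"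
proof -
  have "N (-x) = N x"
    using is_norm_scaleR[OF assms, of "-1" x] by simp
  then show ?thesis
    using is_norm_triangle[OF assms, of x "-x"] is_norm_zero[OF assms] by simp
qed

lemma beta_modulus_short_sum:
  assumes N: "is_norm N" and beta: "ereal b \<le> beta_modulus N t" and "0 < b"
    and "N x \<le> 1" "\<forall>n\<ge>1. N (y n) \<le> 1" "t \<le> sep N y"
  shows "\<exists>n\<ge>1. N (x + y n) < 2 - b"
proof -
  define I where "I = {N (x + y n) / 2 | n. 1 \<le> n}"
  have "ereal (Inf I) \<le> Sup {ereal (Inf {N (x + y n) / 2 | n. 1 \<le> n}) | x y.
       N x \<le> 1 \<and> (\<forall>n\<ge>1. N (y n) \<le> 1) \<and> sep N y \<ge> t}"
    unfolding I_def using assms by (intro Sup_upper) blast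
  then have "beta_modulus N t \<le> 1 - ereal (Inf I)"
    unfolding beta_modulus_def by (intro ereal_minus_mono) auto
  with beta have "ereal b \<le> ereal (1 - Inf I)"
    by (metis order_trans ereal_minus(1) one_ereal_def)
  then have "Inf I < 1 - b / 2"
    using \<open>0 < b\<close> by simp
  moreover have "I \<noteq> {}"
    unfolding I_def by blast
  moreover have "bdd_below I"
    unfolding I_def bdd_below_def using is_norm_nonneg[OF N] by (intro exI[of _ 0]) fastforce
  ultimately obtain z where "z \<in> I" "z < 1 - b / 2"
    using cInf_less_iff by blast
  then show ?thesis
    unfolding I_def by auto
qed

lemma beta_fork:
  fixes a b :: "'a::real_vector" and z :: "nat \<Rightarrow> 'a"
  assumes N: "is_norm N" and "0 < c"
    and beta: "\<And>t. 0 < t \<Longrightarrow> t \<le> 2 \<Longrightarrow> ereal (c * t powr p) \<le> beta_modulus N t"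
    and "1 \<le> \<rho>" "0 < s"
    and ba: "N (b - a) \<le> \<rho> * s" and zb: "\<And>n. N (z n - b) \<le> \<rho> * s"
    and zz: "\<And>m n. m \<noteq> n \<Longrightarrow> 2 * s \<le> N (z m - z n)"
  shows "\<exists>n. N (z n - a) < 2 * \<rho> * s * (1 - c / 2 * (2 / \<rho>) powr p)"
proof -
  \<comment> \<open>After scaling by 1/(\<rho> s) both legs lie in the unit ball and the children are 2/\<rho>-separated.\<close>
  define R where "R = \<rho> * s"
  have R: "0 < R"
    unfolding R_def using \<open>1 \<le> \<rho>\<close> \<open>0 < s\<close> by simp
  define x where "x = (1 / R) *\<^sub>R (b - a)"
  define y where "y n = (1 / R) *\<^sub>R (z n - b)" for n
  have "N x \<le> 1"
    unfolding x_def using is_norm_scaleR[OF N] ba R by (simp add: R_def)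
  moreover have "\<forall>n\<ge>1. N (y n) \<le> 1"
    unfolding y_def using is_norm_scaleR[OF N] zb R by (simp add: R_def)
  moreover have "2 / \<rho> \<le> sep N y"
    unfolding sep_def
  proof (rule cInf_greatest)
    show "{N (y m - y n) |m n. 1 \<le> m \<and> 1 \<le> n \<and> m \<noteq> n} \<noteq> {}"
      by (rule ccontr) (auto dest: spec[of _ "N (y 1 - y 2)"])
  next
    fix d assume "d \<in> {N (y m - y n) |m n. 1 \<le> m \<and> 1 \<le> n \<and> m \<noteq> n}"
    then obtain m n where "m \<noteq> n" "d = N (y m - y n)"
      by blast
    moreover have "y m - y n = (1 / R) *\<^sub>R (z m - z n)"
      unfolding y_def by (simp add: algebra_simps)
    ultimately have "d = N (z m - z n) / R"
      using is_norm_scaleR[OF N] R by simp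
    moreover have "2 * s / R \<le> N (z m - z n) / R"
      using zz[OF \<open>m \<noteq> n\<close>] R by (simp add: divide_right_mono)
    ultimately show "2 / \<rho> \<le> d"
      unfolding R_def using \<open>0 < s\<close> by simp
  qed
  moreover have "0 < c * (2 / \<rho>) powr p"
    using \<open>0 < c\<close> \<open>1 \<le> \<rho>\<close> by simp
  moreover have "ereal (c * (2 / \<rho>) powr p) \<le> beta_modulus N (2 / \<rho>)"
    using \<open>1 \<le> \<rho>\<close> by (intro beta) (auto simp: field_simps)
  ultimately obtain n where n: "N (x + y n) < 2 - c * (2 / \<rho>) powr p"
    using beta_modulus_short_sum[OF N] by blast
  have "x + y n = (1 / R) *\<^sub>R (z n - a)"
    unfolding x_def y_def by (simp add: algebra_simps)
  then have "N (x + y n) = N (z n - a) / R"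
    using is_norm_scaleR[OF N] R by simp
  with n have "N (z n - a) < R * (2 - c * (2 / \<rho>) powr p)"
    using R by (simp add: field_simps)
  then show ?thesis
    unfolding R_def by (auto simp: algebra_simps)
qed

lemma powr_le_mult_one_minus:
  fixes r \<rho> q p :: real
  assumes "1 \<le> r" "r < \<rho> * (1 - q)" "0 < \<rho>" "0 \<le> q" "1 \<le> p"
  shows "r powr p \<le> \<rho> powr p * (1 - q)"
proof -
  have "0 < \<rho> * (1 - q)"
    using assms by linarith
  then have q: "0 < 1 - q" "1 - q \<le> 1"
    using assms by (auto simp: zero_less_mult_iff)
  have "r powr p \<le> (\<rho> * (1 - q)) powr p"
    using assms by (intro powr_mono2) auto
  also have "\<dots> = \<rho> powr p * (1 - q) powr p"
    using q \<open>0 < \<rho>\<close> by (simp add: powr_mult)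
  also have "\<dots> \<le> \<rho> powr p * (1 - q) powr 1"
    using q \<open>1 \<le> p\<close> by (intro mult_left_mono powr_mono') auto
  finally show ?thesis
    using q by simp
qed

lemma powr_le_imp_le_powr_inverse:
  fixes x B p :: real
  assumes "0 \<le> x" "0 < p" "x powr p \<le> B"
  shows "x \<le> B powr (1 / p)"
proof -
  have "x = (x powr p) powr (1 / p)"
    using assms by (simp add: powr_powr)
  also have "\<dots> \<le> B powr (1 / p)"
    using assms by (intro powr_mono2) auto
  finally show ?thesis .
qed

lemma lcp_append: "lcp (xs @ ys) (xs @ zs) = length xs + lcp ys zs"
  by (induction xs) auto

lemma lcp_self: "lcp u u = length u"
  by (induction u) auto

lemma lcp_less: "u \<noteq> v \<Longrightarrow> 2 * lcp u v < length u + length v"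
  by (induction u v rule: lcp.induct) auto

lemma tree_dist_self: "tree_dist u u = 0"
  unfolding tree_dist_def lcp_self by simp

lemma tree_dist_pos: "u \<noteq> v \<Longrightarrow> 0 < tree_dist u v"
  unfolding tree_dist_def using lcp_less[of u v] by simp

lemma tree_dist_append: "tree_dist (u @ w) u = real (length w)"
  unfolding tree_dist_def using lcp_append[of u w "[]"] by simp

lemma tree_dist_branch:
  "m \<noteq> n \<Longrightarrow> tree_dist (u @ m # v) (u @ n # w) = real (length v + length w + 2)"
  unfolding tree_dist_def using lcp_append[of u "m # v" "n # w"] by simp

definition tree_bilipschitz ::
    "('a::real_vector \<Rightarrow> real) \<Rightarrow> nat \<Rightarrow> real \<Rightarrow> (nat list \<Rightarrow> 'a) \<Rightarrow> bool" where
  "tree_bilipschitz N h D g \<longleftrightarrow> (\<forall>u\<in>tree h. \<forall>v\<in>tree h.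
     tree_dist u v \<le> N (g u - g v) \<and> N (g u - g v) \<le> D * tree_dist u v)"

lemma tree_bilipschitzD:
  assumes "tree_bilipschitz N h D g" "length u \<le> h" "length v \<le> h"
  shows "tree_dist u v \<le> N (g u - g v)" "N (g u - g v) \<le> D * tree_dist u v"
  using assms unfolding tree_bilipschitz_def tree_def by auto

lemma tree_bilipschitz_fork_step:
  fixes g :: "nat list \<Rightarrow> 'a::real_vector"
  assumes p: "1 < p" and N: "is_norm N" and "0 < c"
    and beta: "\<And>t. 0 < t \<Longrightarrow> t \<le> 2 \<Longrightarrow> ereal (c * t powr p) \<le> beta_modulus N t"
    and g: "tree_bilipschitz N h D g"
    and "1 \<le> \<rho>" and v: "length v = 2 ^ j" and W: "\<And>n. length (W n) + 1 = 2 ^ j"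
    and "length u + 2 ^ Suc j \<le> h"
    and x: "N (g (u @ v) - g u) \<le> \<rho> * 2 ^ j"
    and z: "\<And>n. N (g (u @ v @ n # W n) - g (u @ v)) \<le> \<rho> * 2 ^ j"
  shows "\<exists>n. (N (g (u @ v @ n # W n) - g u) / 2 ^ Suc j) powr p \<le> \<rho> powr p - c * 2 powr p / 2"
proof -
  have len: "length (v @ n # W n) = 2 ^ Suc j" for n
    using v W[of n] by simp
  then have in_tree: "length (u @ v @ n # W n) \<le> h" for n
    using \<open>length u + 2 ^ Suc j \<le> h\<close> by simp
  have "2 * 2 ^ j \<le> N (g (u @ v @ m # W m) - g (u @ v @ n # W n))" if "m \<noteq> n" for m n
  proof -
    have "length (W m) + length (W n) + 2 = 2 * 2 ^ j"
      using W[of m] W[of n] by simp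
    then have "tree_dist (u @ v @ m # W m) (u @ v @ n # W n) = 2 * 2 ^ j"
      using tree_dist_branch[OF that, of "u @ v"]
      by (metis append_assoc of_nat_numeral of_nat_mult of_nat_power)
    then show ?thesis
      using tree_bilipschitzD(1)[OF g in_tree in_tree] by metis
  qed
  then obtain n where
    n: "N (g (u @ v @ n # W n) - g u) < 2 * \<rho> * 2 ^ j * (1 - c / 2 * (2 / \<rho>) powr p)"
    using beta_fork[OF N \<open>0 < c\<close> beta \<open>1 \<le> \<rho>\<close>, of "2 ^ j" "g (u @ v)" "g u"
        "\<lambda>n. g (u @ v @ n # W n)"] x z
    by auto
  define r where "r = N (g (u @ v @ n # W n) - g u) / 2 ^ Suc j"
  have "tree_dist (u @ v @ n # W n) u = 2 ^ Suc j"
    using tree_dist_append[of u "v @ n # W n"] len[of n] by (metis of_nat_numeral of_nat_power)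
  moreover have "length u \<le> h"
    using in_tree[of n] by simp
  ultimately have "2 ^ Suc j \<le> N (g (u @ v @ n # W n) - g u)"
    using tree_bilipschitzD(1)[OF g in_tree[of n]] by metis
  then have "1 \<le> r"
    unfolding r_def by simp
  moreover have "r < \<rho> * (1 - c / 2 * (2 / \<rho>) powr p)"
    unfolding r_def using n by (simp add: field_simps)
  ultimately have "r powr p \<le> \<rho> powr p * (1 - c / 2 * (2 / \<rho>) powr p)"
    using \<open>1 \<le> \<rho>\<close> \<open>0 < c\<close> p by (intro powr_le_mult_one_minus) auto
  also have "\<dots> = \<rho> powr p - c * 2 powr p / 2"
    using \<open>1 \<le> \<rho>\<close> by (simp add: powr_divide right_diff_distrib)
  finally show ?thesis
    unfolding r_def by blast
qed

lemma tree_bilipschitz_descendant_bound: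
  fixes g :: "nat list \<Rightarrow> 'a::real_vector"
  assumes p: "1 < p" and N: "is_norm N" and "0 < c"
    and beta: "\<And>t. 0 < t \<Longrightarrow> t \<le> 2 \<Longrightarrow> ereal (c * t powr p) \<le> beta_modulus N t"
    and g: "tree_bilipschitz N h D g"
    and "length u + 2 ^ j \<le> h"
  shows "\<exists>w. length w + 1 = 2 ^ j \<and>
    (N (g (u @ k # w) - g u) / 2 ^ j) powr p \<le> D powr p - c * 2 powr p / 2 * real j"
  using \<open>length u + 2 ^ j \<le> h\<close>
proof (induction j arbitrary: u k)
  case 0
  have "N (g (u @ [k]) - g u) \<le> D"
    using tree_bilipschitzD(2)[OF g, of "u @ [k]" u] tree_dist_append[of u "[k]"] 0 by simp
  then have "N (g (u @ [k]) - g u) powr p \<le> D powr p"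
    using is_norm_nonneg[OF N] p by (intro powr_mono2) auto
  then show ?case
    by simp
next
  case (Suc j)
  define B where "B = D powr p - c * 2 powr p / 2 * real j"
  define \<rho> where "\<rho> = B powr (1 / p)"
  have "length u + 2 ^ j \<le> h"
    using Suc.prems by simp
  then obtain w where w: "length w + 1 = 2 ^ j"
    "(N (g (u @ k # w) - g u) / 2 ^ j) powr p \<le> B"
    using Suc.IH unfolding B_def by blast
  define x where "x = u @ k # w"
  have x_len: "length x = length u + 2 ^ j"
    unfolding x_def using w(1) by simp
  have "tree_dist x u = 2 ^ j"
    unfolding x_def using tree_dist_append[of u "k # w"] w(1) by (simp flip: of_nat_Suc)
  then have "1 \<le> N (g x - g u) / 2 ^ j"
    using tree_bilipschitzD(1)[OF g, of x u] x_len Suc.prems by simp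
  then have "1 \<le> B"
    using w(2) p unfolding x_def[symmetric]
    by (meson ge_one_powr_ge_zero less_imp_le order_trans zero_le_one)
  then have \<rho>: "1 \<le> \<rho>" "\<rho> powr p = B"
    unfolding \<rho>_def using p by (auto simp: ge_one_powr_ge_zero powr_powr)
  have ratio: "N y \<le> \<rho> * 2 ^ j" if "(N y / 2 ^ j) powr p \<le> B" for y
    using powr_le_imp_le_powr_inverse[OF _ _ that] is_norm_nonneg[OF N] p
    unfolding \<rho>_def by (simp add: field_simps)
  have "\<forall>n. \<exists>w'. length w' + 1 = 2 ^ j \<and> (N (g (x @ n # w') - g x) / 2 ^ j) powr p \<le> B"
    using Suc.IH[of x] x_len Suc.prems unfolding B_def by simp
  then obtain W where W: "\<And>n. length (W n) + 1 = 2 ^ j"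
    "\<And>n. (N (g (x @ n # W n) - g x) / 2 ^ j) powr p \<le> B"
    by metis
  obtain n where "(N (g (x @ n # W n) - g u) / 2 ^ Suc j) powr p \<le> \<rho> powr p - c * 2 powr p / 2"
    using tree_bilipschitz_fork_step[OF p N \<open>0 < c\<close> beta g \<rho>(1), of "k # w" j W u]
      w(1) W Suc.prems ratio w(2) unfolding x_def by auto
  moreover have "\<rho> powr p - c * 2 powr p / 2 = D powr p - c * 2 powr p / 2 * real (Suc j)"
    unfolding \<rho>(2) B_def by (simp add: algebra_simps add_divide_distrib)
  ultimately show ?case
    using W(1)[of n] w(1) unfolding x_def by (intro exI[of _ "w @ n # W n"]) simp
qed

lemma dyadic_exponent_ln_bound:
  assumes "2 \<le> h"
  obtains j :: nat where "1 \<le> j" "2 ^ j \<le> h" "ln (real h) \<le> 2 * real j * ln 2"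
proof -
  obtain j where j: "2 ^ j \<le> h" "h < 2 ^ (j + 1)"
    using ex_power_ivl1[of 2 h] assms by auto
  have "1 \<le> j"
    using j assms by (cases j) auto
  have "real h < 2 ^ (j + 1)"
    using j(2) by (metis of_nat_less_iff of_nat_numeral of_nat_power)
  then have "ln (real h) < ln (2 ^ (j + 1))"
    using assms by (subst ln_less_cancel_iff) auto
  also have "\<dots> = real (j + 1) * ln 2"
    by (rule ln_realpow)
  also have "\<dots> \<le> 2 * real j * ln 2"
    using \<open>1 \<le> j\<close> by (intro mult_right_mono) auto
  finally show ?thesis
    using that \<open>1 \<le> j\<close> j(1) by simp
qed

lemma tree_bilipschitz_lower_bound:
  fixes g :: "nat list \<Rightarrow> 'a::real_vector"
  assumes p: "1 < p" and N: "is_norm N" and c: "0 < c"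
    and beta: "\<And>t. 0 < t \<Longrightarrow> t \<le> 2 \<Longrightarrow> ereal (c * t powr p) \<le> beta_modulus N t"
    and g: "tree_bilipschitz N h D g" and h: "2 \<le> h"
  shows "(c * 2 powr p / (4 * ln 2)) powr (1 / p) * ln (real h) powr (1 / p) \<le> D"
proof -
  obtain j where j: "1 \<le> j" "2 ^ j \<le> h" "ln (real h) \<le> 2 * real j * ln 2"
    using dyadic_exponent_ln_bound[OF h] .
  obtain w where w: "length w + 1 = 2 ^ j"
    "(N (g (0 # w) - g []) / 2 ^ j) powr p \<le> D powr p - c * 2 powr p / 2 * real j"
    using tree_bilipschitz_descendant_bound[OF p N c beta g, of "[]" j 0] j by auto
  have "tree_dist (0 # w) [] = 2 ^ j"
    using tree_dist_append[of "[]" "0 # w"] w(1) by (metis append_Nil length_Cons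
        of_nat_numeral of_nat_power Suc_eq_plus1)
  then have "1 \<le> N (g (0 # w) - g []) / 2 ^ j"
    using tree_bilipschitzD(1)[OF g, of "0 # w" "[]"] w(1) j by simp
  then have "1 \<le> (N (g (0 # w) - g []) / 2 ^ j) powr p"
    using p by (intro ge_one_powr_ge_zero) auto
  with w(2) have "c * 2 powr p / 2 * real j \<le> D powr p"
    by simp
  moreover have "c * 2 powr p / (4 * ln 2) * ln (real h) \<le> c * 2 powr p / 2 * real j"
    using j(3) c by (simp add: field_simps)
  ultimately have bound: "c * 2 powr p / (4 * ln 2) * ln (real h) \<le> D powr p"
    by linarith
  have "0 \<le> D"
    using tree_bilipschitzD[OF g, of "[0]" "[]"] tree_dist_append[of "[]" "[0]"] h
      is_norm_nonneg[OF N] by simp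
  have "(c * 2 powr p / (4 * ln 2)) powr (1 / p) * ln (real h) powr (1 / p)
      = (c * 2 powr p / (4 * ln 2) * ln (real h)) powr (1 / p)"
    by (rule powr_mult[symmetric])
  also have "\<dots> \<le> (D powr p) powr (1 / p)"
    using bound c h p by (intro powr_mono2) auto
  also have "\<dots> = D"
    using \<open>0 \<le> D\<close> p by (simp add: powr_powr)
  finally show ?thesis .
qed

lemma lip_tree_ge:
  "u \<in> tree h \<Longrightarrow> v \<in> tree h \<Longrightarrow> u \<noteq> v \<Longrightarrow>
    ereal (norm (f u - f v) / tree_dist u v) \<le> lip_tree h f"
  unfolding lip_tree_def by (rule SUP_upper2[of "(u, v)"]) auto

lemma lip_inv_tree_ge:
  "u \<in> tree h \<Longrightarrow> v \<in> tree h \<Longrightarrow> u \<noteq> v \<Longrightarrow>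
    ereal (tree_dist u v / norm (f u - f v)) \<le> lip_inv_tree h f"
  unfolding lip_inv_tree_def by (rule SUP_upper2[of "(u, v)"]) auto

lemma lip_tree_pos:
  assumes "inj_on f (tree h)" "1 \<le> h"
  shows "0 < lip_tree h f" "0 < lip_inv_tree h f"
proof -
  have uv: "[] \<in> tree h" "[0] \<in> tree h" "[] \<noteq> [0]"
    using assms(2) unfolding tree_def by auto
  then have "0 < norm (f [] - f [0])"
    using assms(1) by (auto dest: inj_onD)
  moreover have "tree_dist [] [0] = 1"
    unfolding tree_dist_def by simp
  ultimately show "0 < lip_tree h f" "0 < lip_inv_tree h f"
    using lip_tree_ge[OF uv, of f] lip_inv_tree_ge[OF uv, of f]
    by (metis divide_pos_pos ereal_less(2) zero_less_one less_le_trans)+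
qed

lemma norm_le_lip_tree:
  assumes "lip_tree h f = ereal l" "u \<in> tree h" "v \<in> tree h"
  shows "norm (f u - f v) \<le> l * tree_dist u v"
proof (cases "u = v")
  case False
  then have "norm (f u - f v) / tree_dist u v \<le> l"
    using lip_tree_ge[OF assms(2,3) False, of f] assms(1) by simp
  then show ?thesis
    using tree_dist_pos[OF False] by (simp add: divide_le_eq mult.commute)
qed (simp add: tree_dist_self)

lemma tree_dist_le_lip_inv_tree:
  assumes "inj_on f (tree h)" "lip_inv_tree h f = ereal l" "u \<in> tree h" "v \<in> tree h"
  shows "tree_dist u v \<le> l * norm (f u - f v)"
proof (cases "u = v")
  case False
  then have "tree_dist u v / norm (f u - f v) \<le> l"
    using lip_inv_tree_ge[OF assms(3,4) False, of f] assms(2) by simp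
  moreover have "0 < norm (f u - f v)"
    using assms(1,3,4) False by (auto dest: inj_onD)
  ultimately show ?thesis
    by (simp add: divide_le_eq mult.commute)
qed (simp add: tree_dist_self)

lemma rescaled_tree_bilipschitz:
  assumes N: "is_norm N" and "0 < a" "0 < b" and Nab: "\<forall>x. a * norm x \<le> N x \<and> N x \<le> b * norm x"
    and f: "inj_on f (tree h)" "lip_tree h f = ereal l" "lip_inv_tree h f = ereal l'" "0 \<le> l'"
  shows "tree_bilipschitz N h (b / a * l * l') (\<lambda>u. (l' / a) *\<^sub>R f u)"
  unfolding tree_bilipschitz_def
proof (intro ballI conjI)
  fix u v assume uv: "u \<in> tree h" "v \<in> tree h"
  have N_eq: "N ((l' / a) *\<^sub>R f u - (l' / a) *\<^sub>R f v) = l' / a * N (f u - f v)"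
    using is_norm_scaleR[OF N, of "l' / a" "f u - f v"] \<open>0 < a\<close> \<open>0 \<le> l'\<close>
    by (simp add: scaleR_diff_right)
  have "tree_dist u v \<le> l' * norm (f u - f v)"
    using tree_dist_le_lip_inv_tree[OF f(1,3) uv] .
  also have "\<dots> \<le> l' * (N (f u - f v) / a)"
    using Nab \<open>0 < a\<close> \<open>0 \<le> l'\<close> by (intro mult_left_mono) (auto simp: field_simps)
  finally show "tree_dist u v \<le> N ((l' / a) *\<^sub>R f u - (l' / a) *\<^sub>R f v)"
    unfolding N_eq by simp
  have "l' / a * N (f u - f v) \<le> l' / a * (b * norm (f u - f v))"
    using Nab \<open>0 < a\<close> \<open>0 \<le> l'\<close> by (intro mult_left_mono) auto
  also have "\<dots> \<le> l' / a * (b * (l * tree_dist u v))"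
    using norm_le_lip_tree[OF f(2) uv] \<open>0 < a\<close> \<open>0 < b\<close> \<open>0 \<le> l'\<close>
    by (intro mult_left_mono) auto
  finally show "N ((l' / a) *\<^sub>R f u - (l' / a) *\<^sub>R f v) \<le> b / a * l * l' * tree_dist u v"
    unfolding N_eq by (simp add: field_simps)
qed

lemma distortion_tree_lower_bound:
  fixes f :: "nat list \<Rightarrow> 'a::real_normed_vector" and N :: "'a \<Rightarrow> real"
  assumes p: "1 < p" and N: "is_norm N" and ab: "0 < a" "0 < b"
    and Nab: "\<forall>x. a * norm x \<le> N x \<and> N x \<le> b * norm x" and c: "0 < c"
    and beta: "\<And>t. 0 < t \<Longrightarrow> t \<le> 2 \<Longrightarrow> ereal (c * t powr p) \<le> beta_modulus N t"
    and h: "2 \<le> h" and f: "inj_on f (tree h)"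
  shows "ereal (a / b * (c * 2 powr p / (4 * ln 2)) powr (1 / p) * ln (real h) powr (1 / p))
    \<le> distortion_tree h f"
proof -
  have pos: "0 < lip_tree h f" "0 < lip_inv_tree h f"
    using lip_tree_pos[OF f] h by auto
  show ?thesis
  proof (cases "lip_tree h f = \<infinity> \<or> lip_inv_tree h f = \<infinity>")
    case True
    then show ?thesis
      using pos unfolding distortion_tree_def by auto
  next
    case False
    then obtain l l' where l: "lip_tree h f = ereal l" "lip_inv_tree h f = ereal l'"
      using pos by (cases "lip_tree h f"; cases "lip_inv_tree h f") auto
    then have "0 \<le> l'"
      using pos by simp
    then have "(c * 2 powr p / (4 * ln 2)) powr (1 / p) * ln (real h) powr (1 / p) \<le> b / a * l * l'"
      using tree_bilipschitz_lower_bound[OF p N c beta _ h]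
        rescaled_tree_bilipschitz[OF N ab Nab f l] by blast
    then show ?thesis
      unfolding distortion_tree_def l using ab by (simp add: field_simps)
  qed
qed

theorem theorem2:
  fixes p :: real and N :: "'a::banach \<Rightarrow> real"
  assumes "1 < p"
    and "equivalent_norm N"
    and "beta_power_type N p"
  shows "\<exists>C>0. \<forall>h::nat. 2 \<le> h \<longrightarrow>
           cY_tree TYPE('a) h \<ge> ereal (C * ln (real h) powr (1 / p))"
proof -
  obtain a b where N: "is_norm N" and ab: "0 < a" "0 < b"
    and Nab: "\<forall>x. a * norm x \<le> N x \<and> N x \<le> b * norm x"
    using assms(2) unfolding equivalent_norm_def by blast
  obtain c where c: "0 < c"
    and beta: "\<And>t. 0 < t \<Longrightarrow> t \<le> 2 \<Longrightarrow> ereal (c * t powr p) \<le> beta_modulus N t"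
    using assms(3) unfolding beta_power_type_def by blast
  define C where "C = a / b * (c * 2 powr p / (4 * ln 2)) powr (1 / p)"
  have "0 < C"
    unfolding C_def using ab c by simp
  moreover have "ereal (C * ln (real h) powr (1 / p)) \<le> cY_tree TYPE('a) h" if "2 \<le> h" for h
    unfolding cY_tree_def C_def
    using distortion_tree_lower_bound[OF assms(1) N ab Nab c beta that]
    by (auto intro!: Inf_greatest)
  ultimately show ?thesis
    by blast
qed

end
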